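(* For $1\le i<m+n$ and $d\ge2$, let $A_i^{(d)}=L(e_i)L(e_{i+1}^\ast)|_{\mathbb V^{\otimes d}}$ and $B_i^{(d)}=L(e_{i+1})L(e_i^\ast)|_{\mathbb V^{\otimes d}}$. Then, as operators on $\mathbb V^{\otimes d}=\mathbb V\otimes\mathbb V^{\otimes d-1}$, $$A_i^{(d)}=A_i^{(1)}\otimes K_{i+1}^{-1}+\theta^{\delta_{im}}K_i^{-1}\otimes A_i^{(d-1)},\qquad B_i^{(d)}=B_i^{(1)}\otimes K_i+\theta^{\delta_{im}}K_{i+1}\otimes B_i^{(d-1)},$$ where $(X\otimes Y)(v\otimes w)=Xv\otimes Yw$, $\theta:\mathbb V\to\mathbb V$ is $\theta(e_k)=(-1)^{\hat k}e_k$, and $K_j^{\pm1}$ acts on $\mathbb V$ and on $\mathbb V^{\otimes d-1}$ as below.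
   Context: $q$ is an indeterminate, $m,n\ge1$, $[m+n]=\{1,\dots,m+n\}$. The Hecke algebra $\mathscr H_d$ is the $\mathbb C(q)$-algebra generated by $T_1,\dots,T_{d-1}$ with relations $(T_i-q)(T_i+q^{-1})=0$, $T_iT_{i+1}T_i=T_{i+1}T_iT_{i+1}$, $T_iT_j=T_jT_i$ ($|i-j|>1$); $T_w=T_{i_1}\cdots T_{i_k}$ for a reduced expression $w=s_{i_1}\cdots s_{i_k}\in\mathfrak S_d$; $\mathscr H_\infty$ is the inductive limit of $\mathscr H_0\subset\mathscr H_1\subset\cdots$, and $T\mapsto T^{\uparrow k}$ is the algebra endomorphism with $T_i^{\uparrow k}=T_{i+k}$. Parity: $\hat i=0$ if $i\le m$, $\hat i=1$ if $i>m$; $q_i=q^{(-1)^{\hat i}}$. $\gamma(i,j)=1$ if $i>j$ and $-1$ if $i\le j$. $\mathbb V$ is the $\mathbb C(q)$-vector space with basis $e_1,\dots,e_{m+n}$, $e_i$ of parity $\hat i$; $e_1^\ast,\dots,e_{m+n}^\ast$ is the dual basis. For $I=(i_d,\dots,i_1)\in[m+n]^d$, $e_I=e_{i_d}\otimes\cdots\otimes e_{i_1}$, written $e_{i_d}\cdots e_{i_1}$; $I.s_k$ is $I$ with the entries $i_k,i_{k+1}$ swapped. The right $\mathscr H_d$-action on $\mathbb V^{\otimes d}$: $e_I.T_k=(-1)^{\hat i_k\hat i_{k+1}}e_{I.s_k}$ if $i_k>i_{k+1}$; $=(-1)^{\hat i_k}q_{i_k}e_I$ if $i_k=i_{k+1}$;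 $=(-1)^{\hat i_k\hat i_{k+1}}e_{I.s_k}+(q-q^{-1})e_I$ if $i_k<i_{k+1}$. Set $\widetilde T_d(\mathbb V)=\mathbb V^{\otimes d}\otimes_{\mathscr H_d}\mathscr H_\infty$ (containing $\mathbb V^{\otimes d}$ as $\mathbb V^{\otimes d}\otimes 1$), $\widetilde T(\mathbb V)=\bigoplus_{d\ge0}\widetilde T_d(\mathbb V)$, with product $(e_{j_k}\cdots e_{j_1}\otimes T_\tau)\cdot(e_{i_d}\cdots e_{i_1}\otimes T_\sigma)=e_{j_k}\cdots e_{j_1}e_{i_d}\cdots e_{i_1}\otimes T_\tau^{\uparrow d}T_\sigma$. For $\varphi\in\widetilde T(\mathbb V)$, $L(\varphi)$ is left multiplication by $\varphi$; $L(e_i)$ uses $e_i\otimes1\in\widetilde T_1(\mathbb V)$. For $j\in[m+n]$, $f_j(e_r)=q_j^{-\delta_{jr}}e_r$ and $g_j(e_r)=e_r\otimes T_1^{-\gamma(j,r)}\in\widetilde T_1(\mathbb V)$, and $L(e_j^\ast)=0$ on $\widetilde T_0(\mathbb V)$, $$L(e_j^\ast)(e_{i_d}\cdots e_{i_1}\otimes T_\sigma)=\sum_{k=1}^d(-1)^{\hat j(\hat i_d+\cdots+\hat i_{k+1})}\langle e_j^\ast,e_{i_k}\rangle\,g_j(e_{i_d})\cdots g_j(e_{i_{k+1}})f_j(e_{i_{k-1}})\cdots f_j(e_{i_1})\cdot T_\sigma$$ (product in $\widetilde T(\mathbb V)$). The operator $K_j$ ($j\in[m+n]$) acts on $\mathbb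 V^{\otimes d}$ by $K_j e_I=q_j^{\#\{r:\,i_r=j\}}e_I$ (so on $\mathbb V$, $K_je_r=q_j^{\delta_{jr}}e_r$). *)

theory Defs
  imports "HOL-Computational_Algebra.Polynomial" "HOL-Computational_Algebra.Fraction_Field"
begin

type_synonym K = "complex poly fract"

definition qv :: K where "qv = Fract [:0, 1:] 1"

(* Conventions:
   A word I = (i_d, ..., i_1) in [m+n]^d is stored as the Isabelle list [i_1, ..., i_d],
   i.e. I ! (k-1) = i_k.  Hence e_{i_d} (the leftmost tensor factor) is the LAST list entry.
   A vector of V^{\<otimes>d} is a coefficient function on words, (nat list \<Rightarrow> K),
   supported on words m n d. *)
type_synonym vec = "nat list \<Rightarrow> K"

definition words :: "nat \<Rightarrow> nat \<Rightarrow> nat \<Rightarrow> nat list set" where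
  "words m n d = {I. length I = d \<and> set I \<subseteq> {1..m+n}}"

definition in_tensor :: "nat \<Rightarrow> nat \<Rightarrow> nat \<Rightarrow> vec \<Rightarrow> bool" where
  "in_tensor m n d v \<longleftrightarrow> (\<forall>I. I \<notin> words m n d \<longrightarrow> v I = 0)"

definition par :: "nat \<Rightarrow> nat \<Rightarrow> nat" where
  "par m i = (if i \<le> m then 0 else 1)"

definition qq :: "nat \<Rightarrow> nat \<Rightarrow> K" where
  "qq m i = (if i \<le> m then qv else inverse qv)"

definition gam :: "nat \<Rightarrow> nat \<Rightarrow> int" where
  "gam i j = (if i > j then 1 else -1)"

definition bas :: "nat list \<Rightarrow> vec" where
  "bas I = (\<lambda>J. if J = I then 1 else 0)"

definition vscale :: "K \<Rightarrow> vec \<Rightarrow> vec" where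
  "vscale c v = (\<lambda>J. c * v J)"

definition vadd :: "vec \<Rightarrow> vec \<Rightarrow> vec" where
  "vadd u w = (\<lambda>J. u J + w J)"

definition lext :: "nat \<Rightarrow> nat \<Rightarrow> nat \<Rightarrow> (nat list \<Rightarrow> vec) \<Rightarrow> vec \<Rightarrow> vec" where
  "lext m n d f v = (\<lambda>J. \<Sum>I\<in>words m n d. v I * f I J)"

(* right action of T_k on a basis vector e_I of V^{\<otimes>d} (1 \<le> k < d) *)
definition hT :: "nat \<Rightarrow> nat \<Rightarrow> nat list \<Rightarrow> vec" where
  "hT m k I = (let a = I ! (k - 1); b = I ! k; J = I[k - 1 := b, k := a] in
     if a > b then vscale ((-1) ^ (par m a * par m b)) (bas J)
     else if a = b then vscale ((-1) ^ (par m a) * qq m a) (bas I)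
     else vadd (vscale ((-1) ^ (par m a * par m b)) (bas J)) (vscale (qv - inverse qv) (bas I)))"

(* right action v \<mapsto> v.T_k^e for e \<in> {1,-1} on V^{\<otimes>d};
   T_k^{-1} = T_k - (q - q^{-1}) by the quadratic relation *)
definition hact :: "nat \<Rightarrow> nat \<Rightarrow> nat \<Rightarrow> nat \<Rightarrow> int \<Rightarrow> vec \<Rightarrow> vec" where
  "hact m n d k e v =
     (if e = 1 then lext m n d (hT m k) v
      else vadd (lext m n d (hT m k) v) (vscale (- (qv - inverse qv)) v))"

definition happ :: "nat \<Rightarrow> nat \<Rightarrow> nat \<Rightarrow> (nat \<times> int) list \<Rightarrow> vec \<Rightarrow> vec" where
  "happ m n d h v = foldl (\<lambda>w (a, e). hact m n d a e w) v h"

(* Elements of \<widetilde>T(V) are represented by formal finite sums of terms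
   c \<cdot> (e_w \<otimes> T_{a_1}^{e_1} ... T_{a_r}^{e_r}). *)
type_synonym tterm = "K \<times> nat list \<times> (nat \<times> int) list"

(* L(e_j^star)(e_I \<otimes> 1), following the defining formula: the k-th summand is
   sign * <e_j^star, e_{i_k}> * g_j(e_{i_d}) ... g_j(e_{i_{k+1}}) f_j(e_{i_{k-1}}) ... f_j(e_{i_1}),
   and by the product rule of \<widetilde>T(V) this product equals
   (prod of f-scalars) * e_{i_d} ... e_{i_{k+1}} e_{i_{k-1}} ... e_{i_1}
       \<otimes> T_{d-1}^{-\<gamma>(j,i_d)} T_{d-2}^{-\<gamma>(j,i_{d-1})} ... T_k^{-\<gamma>(j,i_{k+1})}. *)
definition Lstar_coef :: "nat \<Rightarrow> nat \<Rightarrow> nat list \<Rightarrow> nat \<Rightarrow> K" where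
  "Lstar_coef m j I k =
     (-1) ^ (par m j * (\<Sum>t\<in>{k+1..length I}. par m (I ! (t - 1))))
     * (if I ! (k - 1) = j then 1 else 0)
     * (\<Prod>t\<in>{1..<k}. if I ! (t - 1) = j then inverse (qq m j) else 1)"

definition Lstar_hword :: "nat \<Rightarrow> nat list \<Rightarrow> nat \<Rightarrow> (nat \<times> int) list" where
  "Lstar_hword j I k = map (\<lambda>t. (t - 1, - gam j (I ! (t - 1)))) (rev [k + 1..<length I + 1])"

definition Lstar_rep :: "nat \<Rightarrow> nat \<Rightarrow> nat list \<Rightarrow> tterm list" where
  "Lstar_rep m j I =
     map (\<lambda>k. (Lstar_coef m j I k, take (k - 1) I @ drop k I, Lstar_hword j I k))
         [1..<length I + 1]"

(* left multiplication by e_i = e_i \<otimes> 1: (e_i \<otimes> 1)(e_w \<otimes> T) = e_i e_w \<otimes> T *)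
definition Le_rep :: "nat \<Rightarrow> tterm list \<Rightarrow> tterm list" where
  "Le_rep i ts = map (\<lambda>(c, w, h). (c, w @ [i], h)) ts"

(* identification e_w \<otimes> T_x = (e_w . T_x) \<otimes> 1 for T_x \<in> H_d,
   i.e. V^{\<otimes>d} \<otimes>_{H_d} H_d = V^{\<otimes>d} \<subseteq> \<widetilde>T_d(V) *)
definition absorb :: "nat \<Rightarrow> nat \<Rightarrow> nat \<Rightarrow> tterm list \<Rightarrow> vec" where
  "absorb m n d ts = foldr (\<lambda>(c, w, h) acc. vadd (vscale c (happ m n d h (bas w))) acc) ts (\<lambda>_. 0)"

definition LL :: "nat \<Rightarrow> nat \<Rightarrow> nat \<Rightarrow> nat \<Rightarrow> nat \<Rightarrow> vec \<Rightarrow> vec" where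
  "LL m n a b d = lext m n d (\<lambda>I. absorb m n d (Le_rep a (Lstar_rep m b I)))"

definition Aop :: "nat \<Rightarrow> nat \<Rightarrow> nat \<Rightarrow> nat \<Rightarrow> vec \<Rightarrow> vec" where
  "Aop m n i d = LL m n i (i + 1) d"

definition Bop :: "nat \<Rightarrow> nat \<Rightarrow> nat \<Rightarrow> nat \<Rightarrow> vec \<Rightarrow> vec" where
  "Bop m n i d = LL m n (i + 1) i d"

definition Kop :: "nat \<Rightarrow> nat \<Rightarrow> nat \<Rightarrow> int \<Rightarrow> nat \<Rightarrow> vec \<Rightarrow> vec" where
  "Kop m n j e d = lext m n d (\<lambda>I. vscale (qq m j powi (e * int (count_list I j))) (bas I))"

definition theta :: "nat \<Rightarrow> nat \<Rightarrow> vec \<Rightarrow> vec" where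
  "theta m n = lext m n 1 (\<lambda>I. vscale ((-1) ^ par m (hd I)) (bas I))"

definition theta_pow :: "nat \<Rightarrow> nat \<Rightarrow> nat \<Rightarrow> vec \<Rightarrow> vec" where
  "theta_pow m n i = (if i = m then theta m n else id)"

(* tensor of vectors u \<in> V, w \<in> V^{\<otimes>d-1}:  e_r \<otimes> e_J  is the word J @ [r] *)
definition tens :: "vec \<Rightarrow> vec \<Rightarrow> vec" where
  "tens u w = (\<lambda>L. if L = [] then 0 else u [last L] * w (butlast L))"

definition otimes :: "nat \<Rightarrow> nat \<Rightarrow> nat \<Rightarrow> (vec \<Rightarrow> vec) \<Rightarrow> (vec \<Rightarrow> vec) \<Rightarrow> vec \<Rightarrow> vec" where
  "otimes m n d X Y = lext m n d (\<lambda>I. tens (X (bas [last I])) (Y (bas (butlast I))))"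

end

theory Submission imports Defs "HOL-Library.Function_Algebras" begin

text \<open>Write \<open>d = L + 1\<close> and split off the leftmost tensor factor \<open>e\<^sub>r\<close> of a basis vector
\<open>e\<^sub>r \<otimes> e\<^sub>I\<close>. In the defining sum for \<open>L(e\<^sub>a) L(e\<^sub>j\<^sup>*)\<close>, the summand that removes \<open>e\<^sub>r\<close> itself
yields \<open>\<langle>e\<^sub>j\<^sup>*, e\<^sub>r\<rangle> K\<^sub>j\<^sup>-\<^sup>1 e\<^sub>I\<close> in front of \<open>e\<^sub>a\<close>. Every other summand carries the Hecke word
\<open>T\<^sub>L\<^sup>\<plusminus>\<^sup>1 \<cdot> (word on V\<^sup>\<otimes>\<^sup>L)\<close>, and \<open>T\<^sub>L\<^sup>\<plusminus>\<^sup>1\<close> applied to \<open>e\<^sub>a e\<^sub>r \<dots>\<close> is a combination of the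
swapped word \<open>e\<^sub>r e\<^sub>a \<dots>\<close> and of \<open>e\<^sub>a e\<^sub>r \<dots>\<close>; the rest of the word commutes with the outer
factor. This gives a three-term recursion for \<open>L(e\<^sub>a) L(e\<^sub>j\<^sup>*)\<close> in the length of the word.
For \<open>A\<^sub>i\<close> (\<open>a = i, j = i + 1\<close>) the non-swapped term vanishes and the swap coefficient is
exactly the sign \<open>\<theta>\<^sup>\<delta>\<^sup>i\<^sup>m\<close> times \<open>K\<^sub>i\<^sup>-\<^sup>1\<close> on \<open>e\<^sub>r\<close>. For \<open>B\<^sub>i\<close> the non-swapped term survives
when \<open>r = i\<close>; it involves \<open>L(e\<^sub>i) L(e\<^sub>i\<^sup>*)\<close>, which acts on \<open>e\<^sub>I\<close> by the quantum integer
\<open>[c]\<close> (\<open>c\<close> the multiplicity of \<open>i\<close> in \<open>I\<close>), and \<open>q\<^sup>-\<^sup>c + (q - q\<^sup>-\<^sup>1)[c] = q\<^sup>c\<close> produces \<open>K\<^sub>i\<close>.\<close>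

lemma qv_nonzero: "qv \<noteq> 0"
  unfolding qv_def by (simp add: Zero_fract_def eq_fract)

lemma qq_nonzero: "qq m i \<noteq> 0"
  by (simp add: qq_def qv_nonzero)

lemma vadd_eq_plus: "vadd u w = u + w"
  by (simp add: vadd_def plus_fun_def)

lemma vscale_add: "vscale c (u + w) = vscale c u + vscale c w"
  unfolding vscale_def by (rule ext) (simp add: distrib_left)

lemma vscale_add_left: "vscale x u + vscale y u = vscale (x + y) u"
  unfolding vscale_def plus_fun_def by (rule ext) (simp add: algebra_simps)

lemma vscale_vscale: "vscale c (vscale c' u) = vscale (c * c') u"
  unfolding vscale_def by (rule ext) (simp add: mult.assoc)

lemma vscale_simps [simp]: "vscale c 0 = 0" "vscale 0 u = 0" "vscale 1 u = u"
  unfolding vscale_def by auto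

lemma vscale_sum_list: "vscale c (sum_list (map f xs)) = sum_list (map (\<lambda>x. vscale c (f x)) xs)"
  by (induction xs) (simp_all only: list.map sum_list_simps vscale_add vscale_simps(1))

lemma finite_words: "finite (words m n d)"
proof -
  have "words m n d = {xs. set xs \<subseteq> {1..m+n} \<and> length xs = d}"
    unfolding words_def by auto
  then show ?thesis using finite_lists_length_eq[of "{1..m+n}" d] by simp
qed

lemma words_snoc_iff: "I @ [r] \<in> words m n (Suc L) \<longleftrightarrow> I \<in> words m n L \<and> r \<in> {1..m+n}"
  by (auto simp: words_def)

lemma words_singleton: "r \<in> {1..m+n} \<Longrightarrow> [r] \<in> words m n 1"
  by (auto simp: words_def)

lemma words_SucE:
  assumes "I \<in> words m n (Suc L)"
  obtains I' r where "I = I' @ [r]" "I' \<in> words m n L" "r \<in> {1..m+n}"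
proof -
  from assms have "I \<noteq> []" by (auto simp: words_def)
  then have "I = butlast I @ [last I]" by simp
  with assms that show ?thesis by (metis words_snoc_iff)
qed

lemma lext_bas: "I \<in> words m n d \<Longrightarrow> lext m n d f (bas I) = f I"
  unfolding lext_def bas_def
proof (rule ext)
  fix J assume "I \<in> words m n d"
  have "(\<Sum>I'\<in>words m n d. (if I' = I then 1 else 0) * f I' J) = (\<Sum>I'\<in>words m n d. if I' = I then f I' J else 0)"
    by (rule sum.cong) auto
  with \<open>I \<in> words m n d\<close> show "(\<Sum>I'\<in>words m n d. (if I' = I then 1 else 0) * f I' J) = f I J"
    by (simp add: finite_words)
qed

lemma lext_add: "lext m n d f (u + w) = lext m n d f u + lext m n d f w"
  unfolding lext_def by (rule ext) (simp add: distrib_right sum.distrib)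

lemma lext_vscale: "lext m n d f (vscale c u) = vscale c (lext m n d f u)"
  unfolding lext_def vscale_def by (rule ext) (simp add: sum_distrib_left mult.assoc)

lemma lext_add_fun: "lext m n d (\<lambda>I. f I + g I) v = lext m n d f v + lext m n d g v"
  unfolding lext_def by (rule ext) (simp add: distrib_left sum.distrib)

lemma lext_cong: "(\<And>I. I \<in> words m n d \<Longrightarrow> f I = g I) \<Longrightarrow> lext m n d f v = lext m n d g v"
  unfolding lext_def by (rule ext) simp

lemma Kop_bas:
  "I \<in> words m n d \<Longrightarrow> Kop m n j e d (bas I) = vscale (qq m j powi (e * int (count_list I j))) (bas I)"
  unfolding Kop_def by (simp add: lext_bas)

lemma theta_pow_bas:
  assumes "r \<in> {1..m+n}"
  shows "theta_pow m n i (vscale c (bas [r])) = vscale (c * (if i = m then (-1) ^ par m r else 1)) (bas [r])"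
proof -
  have "theta m n (vscale c (bas [r])) = vscale (c * (-1) ^ par m r) (bas [r])"
    unfolding theta_def lext_vscale lext_bas[OF words_singleton[OF assms]] by (simp add: vscale_vscale)
  then show ?thesis by (simp add: theta_pow_def)
qed

lemma tens_add: "tens u (w1 + w2) = tens u w1 + tens u w2"
  unfolding tens_def by (rule ext) (simp add: distrib_left)

lemma tens_vscale_right: "tens u (vscale c w) = vscale c (tens u w)"
  unfolding tens_def vscale_def by (rule ext) (simp add: algebra_simps)

lemma tens_vscale_left: "tens (vscale c u) w = vscale c (tens u w)"
  unfolding tens_def vscale_def by (rule ext) (simp add: algebra_simps)

lemma tens_zero: "tens u 0 = 0"
  unfolding tens_def by (rule ext) simp

lemma tens_bas: "tens (bas [y]) (bas x) = bas (x @ [y])"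
  unfolding tens_def bas_def by (rule ext) (auto simp: snoc_eq_iff_butlast)

lemma tens_sum_list: "tens u (sum_list (map f xs)) = sum_list (map (\<lambda>x. tens u (f x)) xs)"
  by (induction xs) (simp_all only: list.map sum_list_simps tens_add tens_zero)

lemma otimes_split:
  assumes "\<And>I r. I \<in> words m n L \<Longrightarrow> r \<in> {1..m+n} \<Longrightarrow>
      F (I @ [r]) = tens (X (bas [r])) (Y (bas I)) + tens (X' (bas [r])) (Y' (bas I))"
  shows "lext m n (Suc L) F v = vadd (otimes m n (Suc L) X Y v) (otimes m n (Suc L) X' Y' v)"
  unfolding otimes_def vadd_eq_plus lext_add_fun[symmetric]
  by (rule lext_cong) (metis assms words_SucE butlast_snoc last_snoc)

lemma sum_words_tens_bas:
  assumes y: "y \<in> {1..m+n}"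
  shows "(\<Sum>I\<in>words m n (Suc L). tens (bas [y]) w I * f I) = (\<Sum>I\<in>words m n L. w I * f (I @ [y]))"
proof -
  let ?S = "(\<lambda>I. I @ [y]) ` words m n L"
  have "?S \<subseteq> words m n (Suc L)" using y by (auto simp: words_def)
  moreover have "tens (bas [y]) w I * f I = 0" if "I \<in> words m n (Suc L) - ?S" for I
    using that by (auto simp: tens_def bas_def elim!: words_SucE)
  ultimately have "(\<Sum>I\<in>words m n (Suc L). tens (bas [y]) w I * f I)
      = (\<Sum>I\<in>?S. tens (bas [y]) w I * f I)"
    by (intro sum.mono_neutral_right finite_words) auto
  also have "\<dots> = (\<Sum>I\<in>words m n L. w I * f (I @ [y]))"
    by (subst sum.reindex) (auto simp: inj_on_def tens_def bas_def)
  finally show ?thesis .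
qed

subsection \<open>The Hecke action away from the leftmost factor\<close>

lemma hact_add: "hact m n d g e (u + w) = hact m n d g e u + hact m n d g e w"
  unfolding hact_def by (simp add: vadd_eq_plus lext_add vscale_add algebra_simps)

lemma hact_vscale: "hact m n d g e (vscale c u) = vscale c (hact m n d g e u)"
  unfolding hact_def
  by (simp add: vadd_eq_plus lext_vscale vscale_add vscale_vscale mult.commute)

lemma happ_Nil [simp]: "happ m n d [] v = v"
  by (simp add: happ_def)

lemma happ_Cons: "happ m n d ((g, e) # h) v = happ m n d h (hact m n d g e v)"
  by (simp add: happ_def)

lemma happ_add: "happ m n d h (u + w) = happ m n d h u + happ m n d h w"
  by (induction h arbitrary: u w) (auto simp: happ_Cons hact_add)

lemma happ_vscale: "happ m n d h (vscale c u) = vscale c (happ m n d h u)"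
  by (induction h arbitrary: u) (auto simp: happ_Cons hact_vscale)

lemma hT_snoc:
  assumes "length x = L" "1 \<le> g" "g < L"
  shows "hT m g (x @ [y]) = tens (bas [y]) (hT m g x)"
proof -
  have nth: "(x @ [y]) ! (g - 1) = x ! (g - 1)" "(x @ [y]) ! g = x ! g"
    using assms by (auto simp: nth_append)
  have upd: "(x @ [y])[g - 1 := p, g := p'] = x[g - 1 := p, g := p'] @ [y]" for p p'
    using assms by (simp add: list_update_append) linarith
  show ?thesis
    unfolding hT_def Let_def nth upd
    by (simp add: tens_bas tens_vscale_right tens_add vadd_eq_plus)
qed

lemma hact_tens_bas:
  assumes y: "y \<in> {1..m+n}" and g: "1 \<le> g" "g < L"
  shows "hact m n (Suc L) g e (tens (bas [y]) w) = tens (bas [y]) (hact m n L g e w)"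
proof -
  have "lext m n (Suc L) (hT m g) (tens (bas [y]) w) = tens (bas [y]) (lext m n L (hT m g) w)"
  proof (rule ext)
    fix J
    have "lext m n (Suc L) (hT m g) (tens (bas [y]) w) J = (\<Sum>I\<in>words m n L. w I * hT m g (I @ [y]) J)"
      unfolding lext_def by (rule sum_words_tens_bas[OF y])
    also have "\<dots> = (\<Sum>I\<in>words m n L. w I * tens (bas [y]) (hT m g I) J)"
      by (rule sum.cong) (auto simp: hT_snoc[OF _ g] words_def)
    also have "\<dots> = tens (bas [y]) (lext m n L (hT m g) w) J"
      unfolding tens_def lext_def by (simp add: sum_distrib_left algebra_simps)
    finally show "lext m n (Suc L) (hT m g) (tens (bas [y]) w) J = tens (bas [y]) (lext m n L (hT m g) w) J" .
  qed
  then show ?thesis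
    unfolding hact_def by (simp add: vadd_eq_plus tens_add tens_vscale_right)
qed

lemma happ_tens_bas:
  assumes y: "y \<in> {1..m+n}" and h: "\<forall>(g, e)\<in>set h. 1 \<le> g \<and> g < L"
  shows "happ m n (Suc L) h (tens (bas [y]) w) = tens (bas [y]) (happ m n L h w)"
  using h
proof (induction h arbitrary: w)
  case (Cons p h)
  obtain g e where p: "p = (g, e)" by (cases p)
  with Cons.prems have "1 \<le> g" "g < L" by auto
  with Cons show ?case by (simp add: p happ_Cons hact_tens_bas[OF y])
qed simp

subsection \<open>The Hecke generator acting on the two leftmost factors\<close>

text \<open>In list order \<open>u @ [r, a]\<close> is \<open>e\<^sub>a e\<^sub>r e\<^sub>u\<close>; \<open>swap_coef\<close> and \<open>keep_coef\<close> are the coefficients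
of \<open>e\<^sub>r e\<^sub>a e\<^sub>u\<close> and \<open>e\<^sub>a e\<^sub>r e\<^sub>u\<close> in \<open>e\<^sub>a e\<^sub>r e\<^sub>u . T\<^sup>e\<close>, where \<open>T\<^sup>-\<^sup>1 = T - (q - q\<^sup>-\<^sup>1)\<close>.\<close>

definition swap_coef :: "nat \<Rightarrow> nat \<Rightarrow> nat \<Rightarrow> int \<Rightarrow> K" where
  "swap_coef m r a e = (if r = a then (-1) ^ (par m a) * qq m a + (if e = 1 then 0 else - (qv - inverse qv))
     else (-1) ^ (par m r * par m a))"

definition keep_coef :: "nat \<Rightarrow> nat \<Rightarrow> nat \<Rightarrow> int \<Rightarrow> K" where
  "keep_coef m r a e = (if a < r then (if e = 1 then 0 else - (qv - inverse qv))
     else if r = a then 0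
     else (qv - inverse qv) + (if e = 1 then 0 else - (qv - inverse qv)))"

lemma hact_last_bas:
  assumes "length u = L" "u @ [r, a] \<in> words m n (Suc (Suc L))"
  shows "hact m n (Suc (Suc L)) (Suc L) e (bas (u @ [r, a]))
       = vscale (swap_coef m r a e) (bas (u @ [a, r])) + vscale (keep_coef m r a e) (bas (u @ [r, a]))"
proof -
  have nth: "(u @ [r, a]) ! (Suc L - 1) = r" "(u @ [r, a]) ! Suc L = a"
    using assms by (auto simp: nth_append)
  have upd: "(u @ [r, a])[Suc L - 1 := a, Suc L := r] = u @ [a, r]"
    using assms by (simp add: list_update_append)
  show ?thesis
    unfolding hact_def lext_bas[OF assms(2)] hT_def Let_def nth upd
    by (rule ext) (auto simp: swap_coef_def keep_coef_def vscale_def vadd_def bas_def plus_fun_def algebra_simps)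
qed

lemma keep_coef_vanishes: "a \<le> j \<Longrightarrow> j \<le> a + 1 \<Longrightarrow> keep_coef m r a (- gam j r) = 0"
  by (auto simp: keep_coef_def gam_def)

lemma swap_coef_diag: "(-1) ^ (par m i * par m r) * swap_coef m r i (- gam i r) = (if r = i then qq m i else 1)"
  by (auto simp: swap_coef_def gam_def par_def qq_def)

lemma swap_coef_A: "(-1) ^ (par m (i + 1) * par m r) * swap_coef m r i (- gam (i + 1) r)
   = (if i = m then (-1) ^ par m r else 1) * (if r = i then inverse (qq m i) else 1)"
  using qv_nonzero by (auto simp: swap_coef_def gam_def par_def qq_def field_simps)

lemma swap_coef_B: "(-1) ^ (par m i * par m r) * swap_coef m r (i + 1) (- gam i r)
   = (if i = m then (-1) ^ par m r else 1) * (if r = i + 1 then qq m (i + 1) else 1)"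
  using qv_nonzero by (auto simp: swap_coef_def gam_def par_def qq_def field_simps)

subsection \<open>A recursion for \<open>L(e\<^sub>a) L(e\<^sub>j\<^sup>*)\<close> on basis vectors\<close>

definition Lstar_term :: "nat \<Rightarrow> nat \<Rightarrow> nat \<Rightarrow> nat \<Rightarrow> nat \<Rightarrow> nat list \<Rightarrow> nat \<Rightarrow> vec" where
  "Lstar_term m n d a j I k = vscale (Lstar_coef m j I k)
      (happ m n d (Lstar_hword j I k) (bas (take (k - 1) I @ drop k I @ [a])))"

definition LL_bas :: "nat \<Rightarrow> nat \<Rightarrow> nat \<Rightarrow> nat \<Rightarrow> nat \<Rightarrow> nat list \<Rightarrow> vec" where
  "LL_bas m n d a j I = sum_list (map (Lstar_term m n d a j I) [1..<length I + 1])"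

lemma absorb_Le_rep_Lstar_rep: "absorb m n d (Le_rep a (Lstar_rep m j I)) = LL_bas m n d a j I"
proof -
  have "absorb m n d ts = sum_list (map (\<lambda>(c, w, h). vscale c (happ m n d h (bas w))) ts)" for ts
    by (induction ts) (auto simp: absorb_def vadd_eq_plus zero_fun_def)
  then show ?thesis
    unfolding Le_rep_def Lstar_rep_def LL_bas_def Lstar_term_def by (simp add: o_def)
qed

lemma Aop_eq_lext_LL_bas: "Aop m n i d = lext m n d (LL_bas m n d i (i + 1))"
  unfolding Aop_def LL_def absorb_Le_rep_Lstar_rep by simp

lemma Bop_eq_lext_LL_bas: "Bop m n i d = lext m n d (LL_bas m n d (i + 1) i)"
  unfolding Bop_def LL_def absorb_Le_rep_Lstar_rep by simp

lemma prod_if_nth_eq_count_list: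
  fixes c :: "'a :: comm_monoid_mult"
  shows "(\<Prod>t\<in>{1..<length I + 1}. if I ! (t - 1) = j then c else 1) = c ^ count_list I j"
proof (induction I rule: rev_induct)
  case (snoc x xs)
  define g where "g t = (if (xs @ [x]) ! (t - 1) = j then c else 1)" for t
  have "(\<Prod>t\<in>{1..<length (xs @ [x]) + 1}. g t) = (\<Prod>t\<in>{1..<Suc (length xs)}. g t) * g (Suc (length xs))"
    by (simp add: prod.atLeastLessThan_Suc)
  also have "(\<Prod>t\<in>{1..<Suc (length xs)}. g t) = (\<Prod>t\<in>{1..<length xs + 1}. if xs ! (t - 1) = j then c else 1)"
    unfolding g_def by (intro prod.cong) (auto simp: nth_append)
  also have "g (Suc (length xs)) = (if x = j then c else 1)"
    by (simp add: g_def)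
  finally show ?case using snoc by (simp add: g_def mult.commute)
qed simp

lemma Lstar_coef_snoc:
  assumes "1 \<le> k" "k \<le> length I"
  shows "Lstar_coef m j (I @ [r]) k = (-1) ^ (par m j * par m r) * Lstar_coef m j I k"
proof -
  have s: "{k+1..Suc (length I)} = insert (Suc (length I)) {k+1..length I}" using assms by auto
  have sum: "(\<Sum>t\<in>{k+1..length (I @ [r])}. par m ((I @ [r]) ! (t - 1)))
     = par m r + (\<Sum>t\<in>{k+1..length I}. par m (I ! (t - 1)))"
    unfolding length_append_singleton s
    by (subst sum.insert) (auto simp: nth_append intro!: sum.cong)
  have prod: "(\<Prod>t\<in>{1..<k}. if (I @ [r]) ! (t - 1) = j then inverse (qq m j) else 1)
     = (\<Prod>t\<in>{1..<k}. if I ! (t - 1) = j then inverse (qq m j) else 1)"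
    using assms by (intro prod.cong) (auto simp: nth_append)
  have "(I @ [r]) ! (k - 1) = I ! (k - 1)" using assms by (auto simp: nth_append)
  with sum prod show ?thesis
    unfolding Lstar_coef_def by (simp add: distrib_left power_add)
qed

lemma Lstar_hword_snoc:
  assumes "1 \<le> k" "k \<le> length I"
  shows "Lstar_hword j (I @ [r]) k = (length I, - gam j r) # Lstar_hword j I k"
proof -
  have "rev [k + 1..<length (I @ [r]) + 1] = Suc (length I) # rev [k + 1..<length I + 1]"
    using assms by simp
  then show ?thesis unfolding Lstar_hword_def using assms by (auto simp: nth_append)
qed

lemma Lstar_hword_range: "1 \<le> k \<Longrightarrow> \<forall>(g, e)\<in>set (Lstar_hword j I k). 1 \<le> g \<and> g < length I"
  unfolding Lstar_hword_def by auto

lemma Lstar_term_snoc: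
  assumes I: "I \<in> words m n L" and r: "r \<in> {1..m+n}" and a: "a \<in> {1..m+n}"
    and k: "1 \<le> k" "k \<le> L"
  shows "Lstar_term m n (Suc L) a j (I @ [r]) k
     = vscale ((-1) ^ (par m j * par m r) * swap_coef m r a (- gam j r)) (tens (bas [r]) (Lstar_term m n L a j I k))
     + vscale ((-1) ^ (par m j * par m r) * keep_coef m r a (- gam j r)) (tens (bas [a]) (Lstar_term m n L r j I k))"
proof -
  have len: "length I = L" using I by (simp add: words_def)
  obtain L' where L': "L = Suc L'" using k by (cases L) auto
  define u where "u = take (k - 1) I @ drop k I"
  have lu: "length u = L'" using k len L' by (simp add: u_def)
  have w: "take (k - 1) (I @ [r]) @ drop k (I @ [r]) @ [a] = u @ [r, a]"
    using k len by (simp add: u_def)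
  have "set u \<subseteq> set I" unfolding u_def by (auto dest: in_set_takeD in_set_dropD)
  then have wr: "u @ [r, a] \<in> words m n (Suc (Suc L'))"
    using I r a lu unfolding words_def by auto
  have hr: "\<forall>(g, e)\<in>set (Lstar_hword j I k). 1 \<le> g \<and> g < Suc L'"
    using Lstar_hword_range[OF k(1), of j I] len L' by simp
  have b1: "bas (u @ [a, r]) = tens (bas [r]) (bas (u @ [a]))"
    and b2: "bas (u @ [r, a]) = tens (bas [a]) (bas (u @ [r]))" by (simp_all add: tens_bas)
  show ?thesis
    unfolding Lstar_term_def Lstar_coef_snoc[OF k(1) k(2)[folded len]]
      Lstar_hword_snoc[OF k(1) k(2)[folded len]] w
    unfolding len L' happ_Cons hact_last_bas[OF lu wr]
    unfolding happ_add happ_vscale b1 b2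
    unfolding happ_tens_bas[OF r hr] happ_tens_bas[OF a hr]
    by (simp add: u_def tens_vscale_right vscale_vscale vscale_add algebra_simps)
qed

lemma Lstar_term_last:
  assumes "length I = L"
  shows "Lstar_term m n (Suc L) a j (I @ [r]) (Suc L)
       = vscale ((if r = j then 1 else 0) * inverse (qq m j) ^ count_list I j) (bas (I @ [a]))"
proof -
  have "(\<Prod>t\<in>{1..<Suc L}. if (I @ [r]) ! (t - 1) = j then inverse (qq m j) else 1)
      = (\<Prod>t\<in>{1..<length I + 1}. if I ! (t - 1) = j then inverse (qq m j) else 1)"
    using assms by (intro prod.cong) (auto simp: nth_append)
  then have "(\<Prod>t\<in>{1..<Suc L}. if (I @ [r]) ! (t - 1) = j then inverse (qq m j) else 1)
      = inverse (qq m j) ^ count_list I j"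
    by (simp only: prod_if_nth_eq_count_list)
  with assms show ?thesis
    unfolding Lstar_term_def Lstar_coef_def Lstar_hword_def by (simp add: nth_append)
qed

lemma LL_bas_snoc:
  assumes I: "I \<in> words m n L" and r: "r \<in> {1..m+n}" and a: "a \<in> {1..m+n}"
  shows "LL_bas m n (Suc L) a j (I @ [r])
     = vscale ((if r = j then 1 else 0) * inverse (qq m j) ^ count_list I j) (bas (I @ [a]))
     + vscale ((-1) ^ (par m j * par m r) * swap_coef m r a (- gam j r)) (tens (bas [r]) (LL_bas m n L a j I))
     + vscale ((-1) ^ (par m j * par m r) * keep_coef m r a (- gam j r)) (tens (bas [a]) (LL_bas m n L r j I))"
proof -
  have len: "length I = L" using I by (simp add: words_def)
  have up: "[1..<length (I @ [r]) + 1] = [1..<L + 1] @ [Suc L]" using len by simp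
  have mid: "map (Lstar_term m n (Suc L) a j (I @ [r])) [1..<L + 1]
     = map (\<lambda>k. vscale ((-1) ^ (par m j * par m r) * swap_coef m r a (- gam j r)) (tens (bas [r]) (Lstar_term m n L a j I k))
     + vscale ((-1) ^ (par m j * par m r) * keep_coef m r a (- gam j r)) (tens (bas [a]) (Lstar_term m n L r j I k))) [1..<L + 1]"
    by (rule map_cong) (auto simp: Lstar_term_snoc[OF I r a])
  show ?thesis
    unfolding LL_bas_def up map_append sum_list_append mid sum_list_addf len
    by (simp add: Lstar_term_last[OF len] vscale_sum_list tens_sum_list algebra_simps)
qed

lemma LL_bas_singleton:
  assumes "r \<in> {1..m+n}" "a \<in> {1..m+n}"
  shows "LL_bas m n 1 a j [r] = vscale (if r = j then 1 else 0) (bas [a])"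
  using LL_bas_snoc[of "[]" m n 0 r a j] assms by (simp add: LL_bas_def tens_zero words_def)

text \<open>\<open>L(e\<^sub>i) L(e\<^sub>i\<^sup>*)\<close> acts on \<open>e\<^sub>I\<close> by the quantum integer \<open>[c]\<close>, stated without division.\<close>

lemma LL_bas_diag:
  assumes "I \<in> words m n L" and i: "i \<in> {1..m+n}"
  shows "vscale (qq m i - inverse (qq m i)) (LL_bas m n L i i I)
       = vscale (qq m i ^ count_list I i - inverse (qq m i) ^ count_list I i) (bas I)"
  using assms(1)
proof (induction I arbitrary: L rule: rev_induct)
  case Nil
  then show ?case by (simp add: LL_bas_def vscale_def)
next
  case (snoc r I)
  then obtain L' where L: "L = Suc L'" and I: "I \<in> words m n L'" and r: "r \<in> {1..m+n}"
    by (cases L) (auto simp: words_def)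
  let ?p = "qq m i"
  let ?c = "count_list I i"
  have IH: "vscale (?p - inverse ?p) (LL_bas m n L' i i I) = vscale (?p ^ ?c - inverse ?p ^ ?c) (bas I)"
    using snoc.IH[OF I] .
  have step: "LL_bas m n L i i (I @ [r]) = vscale ((if r = i then 1 else 0) * inverse ?p ^ ?c) (bas (I @ [i]))
     + vscale (if r = i then ?p else 1) (tens (bas [r]) (LL_bas m n L' i i I))"
    unfolding L LL_bas_snoc[OF I r i] keep_coef_vanishes[OF order_refl le_add1] swap_coef_diag by simp
  show ?case
  proof (cases "r = i")
    case True
    have "vscale (?p - inverse ?p) (LL_bas m n L i i (I @ [r]))
        = vscale ((?p - inverse ?p) * inverse ?p ^ ?c) (bas (I @ [i]))
          + vscale ?p (tens (bas [i]) (vscale (?p - inverse ?p) (LL_bas m n L' i i I)))"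
      unfolding step using True by (simp add: vscale_add vscale_vscale tens_vscale_right mult_ac)
    also have "\<dots> = vscale ((?p - inverse ?p) * inverse ?p ^ ?c + ?p * (?p ^ ?c - inverse ?p ^ ?c)) (bas (I @ [i]))"
      unfolding IH tens_vscale_right tens_bas vscale_vscale
      by (simp add: vscale_def plus_fun_def algebra_simps)
    also have "(?p - inverse ?p) * inverse ?p ^ ?c + ?p * (?p ^ ?c - inverse ?p ^ ?c)
       = ?p ^ Suc ?c - inverse ?p ^ Suc ?c"
      using qq_nonzero[of m i] by (simp add: field_simps)
    finally show ?thesis using True by simp
  next
    case False
    have "vscale (?p - inverse ?p) (LL_bas m n L i i (I @ [r]))
        = tens (bas [r]) (vscale (?p - inverse ?p) (LL_bas m n L' i i I))"
      unfolding step using False by (simp add: tens_vscale_right)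
    then show ?thesis using False IH by (simp add: tens_vscale_right tens_bas)
  qed
qed

subsection \<open>The recursions for \<open>A\<^sub>i\<close> and \<open>B\<^sub>i\<close>\<close>

lemma LL_bas_A_snoc:
  assumes I: "I \<in> words m n L" and r: "r \<in> {1..m+n}" and i: "1 \<le> i" "i < m + n"
  shows "LL_bas m n (Suc L) i (i + 1) (I @ [r])
     = tens (Aop m n i 1 (bas [r])) (Kop m n (i + 1) (-1) L (bas I))
     + tens ((theta_pow m n i \<circ> Kop m n i (-1) 1) (bas [r])) (Aop m n i L (bas I))"
proof -
  have ia: "i \<in> {1..m+n}" "i + 1 \<in> {1..m+n}" using i by auto
  have "qq m i powi (- 1 * int (count_list [r] i)) = (if r = i then inverse (qq m i) else 1)"
    by (simp add: power_int_minus)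
  then show ?thesis
    unfolding LL_bas_snoc[OF I r ia(1)] keep_coef_vanishes[OF le_add1 order_refl] swap_coef_A
      Aop_eq_lext_LL_bas lext_bas[OF words_singleton[OF r]] lext_bas[OF I] LL_bas_singleton[OF r ia(1)]
      o_apply Kop_bas[OF I] Kop_bas[OF words_singleton[OF r]] theta_pow_bas[OF r]
    by (simp add: power_int_minus power_inverse tens_vscale_right tens_vscale_left tens_bas
        vscale_vscale mult_ac)
qed

lemma LL_bas_B_snoc:
  assumes I: "I \<in> words m n L" and r: "r \<in> {1..m+n}" and i: "1 \<le> i" "i < m + n"
  shows "LL_bas m n (Suc L) (i + 1) i (I @ [r])
     = tens (Bop m n i 1 (bas [r])) (Kop m n i 1 L (bas I))
     + tens ((theta_pow m n i \<circ> Kop m n (i + 1) 1 1) (bas [r])) (Bop m n i L (bas I))"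
proof -
  have ia: "i \<in> {1..m+n}" "i + 1 \<in> {1..m+n}" using i by auto
  let ?p = "qq m i"
  let ?c = "count_list I i"
  have keep: "(-1) ^ (par m i * par m r) * keep_coef m r (i + 1) (- gam i r)
      = (if r = i then ?p - inverse ?p else 0)"
    by (auto simp: keep_coef_def gam_def par_def qq_def)
  have diag: "vscale (if r = i then ?p - inverse ?p else 0) (tens (bas [i + 1]) (LL_bas m n L r i I))
      = vscale (if r = i then ?p ^ ?c - inverse ?p ^ ?c else 0) (bas (I @ [i + 1]))"
  proof (cases "r = i")
    case True
    have "vscale (?p - inverse ?p) (tens (bas [i + 1]) (LL_bas m n L i i I))
        = tens (bas [i + 1]) (vscale (?p - inverse ?p) (LL_bas m n L i i I))"
      by (simp only: tens_vscale_right)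
    also have "\<dots> = vscale (?p ^ ?c - inverse ?p ^ ?c) (bas (I @ [i + 1]))"
      unfolding LL_bas_diag[OF I ia(1)] tens_vscale_right tens_bas ..
    finally show ?thesis using True by simp
  qed (simp add: tens_zero)
  have first: "vscale ((if r = i then 1 else 0) * inverse ?p ^ ?c) (bas (I @ [i + 1]))
      + vscale (if r = i then ?p ^ ?c - inverse ?p ^ ?c else 0) (bas (I @ [i + 1]))
      = vscale (if r = i then ?p powi (1 * int ?c) else 0) (bas (I @ [i + 1]))"
    unfolding vscale_add_left by simp
  have "LL_bas m n (Suc L) (i + 1) i (I @ [r])
     = vscale (if r = i then ?p powi (1 * int ?c) else 0) (bas (I @ [i + 1]))
     + vscale ((if i = m then (-1) ^ par m r else 1) * (if r = i + 1 then qq m (i + 1) else 1))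
        (tens (bas [r]) (LL_bas m n L (i + 1) i I))"
    unfolding LL_bas_snoc[OF I r ia(2)] keep diag swap_coef_B first[symmetric]
    by (simp add: algebra_simps)
  also have "\<dots> = tens (Bop m n i 1 (bas [r])) (Kop m n i 1 L (bas I))
     + tens ((theta_pow m n i \<circ> Kop m n (i + 1) 1 1) (bas [r])) (Bop m n i L (bas I))"
    unfolding Bop_eq_lext_LL_bas lext_bas[OF words_singleton[OF r]] lext_bas[OF I]
      LL_bas_singleton[OF r ia(2)] o_apply Kop_bas[OF I] Kop_bas[OF words_singleton[OF r]]
      theta_pow_bas[OF r]
    by (simp add: tens_vscale_right tens_vscale_left tens_bas vscale_vscale mult_ac)
  finally show ?thesis .
qed

theorem lemma6p4:
  fixes m n i d :: nat and v :: vec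
  assumes "1 \<le> m" and "1 \<le> n" and "1 \<le> i" and "i < m + n" and "2 \<le> d"
    and "in_tensor m n d v"
  shows "Aop m n i d v =
           vadd (otimes m n d (Aop m n i 1) (Kop m n (i + 1) (-1) (d - 1)) v)
                (otimes m n d (theta_pow m n i \<circ> Kop m n i (-1) 1) (Aop m n i (d - 1)) v)
       \<and> Bop m n i d v =
           vadd (otimes m n d (Bop m n i 1) (Kop m n i 1 (d - 1)) v)
                (otimes m n d (theta_pow m n i \<circ> Kop m n (i + 1) 1 1) (Bop m n i (d - 1)) v)"
proof -
  \<comment> \<open>Both sides only read \<open>v\<close> on words of length \<open>d\<close>.\<close>
  obtain L where d: "d = Suc L" using assms(5) by (cases d) auto
  have "lext m n (Suc L) (LL_bas m n (Suc L) i (i + 1)) v =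
      vadd (otimes m n (Suc L) (Aop m n i 1) (Kop m n (i + 1) (-1) L) v)
           (otimes m n (Suc L) (theta_pow m n i \<circ> Kop m n i (-1) 1) (Aop m n i L) v)"
    by (rule otimes_split) (rule LL_bas_A_snoc; use assms in simp)
  moreover have "lext m n (Suc L) (LL_bas m n (Suc L) (i + 1) i) v =
      vadd (otimes m n (Suc L) (Bop m n i 1) (Kop m n i 1 L) v)
           (otimes m n (Suc L) (theta_pow m n i \<circ> Kop m n (i + 1) 1 1) (Bop m n i L) v)"
    by (rule otimes_split) (rule LL_bas_B_snoc; use assms in simp)
  ultimately show ?thesis
    unfolding d diff_Suc_1 Aop_eq_lext_LL_bas[of m n i "Suc L"] Bop_eq_lext_LL_bas[of m n i "Suc L"] ..
qed

end
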